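(* For every $1\le n\le N$ one has $\Delta^j\mathbb K_n(0)=\Phi_1(n)$, $\Delta^j\mathbb K_n(N)=\Phi_2(n)$, $$\mathbb K_n(x)=K_n(x)-\lambda\,\Phi_1(n)\,\mathscr K_{n-1}^{(0,j)}(x,0)-\mu\,\Phi_2(n)\,\mathscr K_{n-1}^{(0,j)}(x,N),$$ and, as an identity of rational functions of $x$, $$\mathbb K_n(x)=\mathscr C_{1,n}(x)\,K_n(x)+\mathscr D_{1,n}(x)\,K_{n-1}(x).$$
   Context: Fix an integer $N\ge 1$ and $0<p<1$. Notation: $(a)_0=1$, $(a)_k=a(a+1)\cdots(a+k-1)$ (Pochhammer symbol); $[z]_0=1$, $[z]_k=z(z-1)\cdots(z-k+1)$ (falling factorial). For a function $f$, $\Delta f(x)=f(x+1)-f(x)$, $\nabla f(x)=f(x)-f(x-1)$, $\Delta^0$ is the identity and $\Delta^k=\Delta\circ\Delta^{k-1}$. For $0\le n\le N$ the monic Kravchuk polynomial is $K_n(x)=p^n(-N)_n\sum_{k=0}^{n}\frac{(-n)_k(-x)_k}{(-N)_k\,k!}p^{-k}$, and $K_{-1}=0$; these are monic of degree $n$ and orthogonal on $\{0,\dots,N\}$ with respect to the binomial weight $w(x)=\binom{N}{x}p^x(1-p)^{N-x}$, with $\|K_n\|^2=\sum_{x=0}^N K_n(x)^2w(x)=n!(-N)_np^n(p-1)^n$. For $1\le n\le N+1$ and integers $i,l\ge0$, $\mathscr K_{n-1}^{(i,l)}(x,y)=\sum_{k=0}^{n-1}\frac{\Delta^iK_k(x)\,\Delta^lK_k(y)}{\|K_k\|^2}$.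 Fix $\lambda,\mu>0$ and an integer $j\ge 0$. On real polynomials define $\langle f,g\rangle_{\lambda,\mu}=\sum_{x=0}^N f(x)g(x)w(x)+\lambda\Delta^jf(0)\Delta^jg(0)+\mu\Delta^jf(N)\Delta^jg(N)$. For $0\le n\le N$, $\mathbb K_n=\mathbb K_n^{(j)}$ is the monic polynomial of degree $n$ with $\langle\mathbb K_n,q\rangle_{\lambda,\mu}=0$ for all polynomials $q$ of degree $<n$ (Kravchuk–Sobolev polynomials). For $1\le n\le N$: $\mathscr A_n(x,y)=\frac{j!}{\|K_{n-1}\|^2[x-y]_{j+1}}\sum_{k=0}^{j}\frac{\Delta^kK_{n-1}(y)}{k!}[x-y]_k$, $\mathscr B_n(x,y)=-\frac{j!}{\|K_{n-1}\|^2[x-y]_{j+1}}\sum_{k=0}^{j}\frac{\Delta^kK_{n}(y)}{k!}[x-y]_k$; $k_{00}=\mathscr K^{(j,j)}_{n-1}(0,0)$, $k_{0N}=\mathscr K^{(j,j)}_{n-1}(0,N)$, $k_{N0}=\mathscr K^{(j,j)}_{n-1}(N,0)$, $k_{NN}=\mathscr K^{(j,j)}_{n-1}(N,N)$, $d_0=\Delta^jK_n(0)$, $d_N=\Delta^jK_n(N)$, $\delta_n=(1+\lambda k_{00})(1+\mu k_{NN})-\lambda\mu k_{0N}k_{N0}$ (which is nonzero), $\Phi_1(n)=\frac{d_0(1+\mu k_{NN})-\mu k_{0N}d_N}{\delta_n}$, $\Phi_2(n)=\frac{(1+\lambda k_{00})d_N-\lambda k_{N0}d_0}{\delta_n}$;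 $\mathscr C_{1,n}(x)=1-\lambda\Phi_1(n)\mathscr A_n(x,0)-\mu\Phi_2(n)\mathscr A_n(x,N)$ and $\mathscr D_{1,n}(x)=-\lambda\Phi_1(n)\mathscr B_n(x,0)-\mu\Phi_2(n)\mathscr B_n(x,N)$. *)

theory Defs
  imports "HOL-Computational_Algebra.Polynomial"
begin

definition fall :: "real \<Rightarrow> nat \<Rightarrow> real" where
  "fall z k = (\<Prod>i<k. (z - of_nat i))"

definition fdiff :: "(real \<Rightarrow> real) \<Rightarrow> real \<Rightarrow> real" where
  "fdiff f x = f (x + 1) - f x"

definition fdiffs :: "nat \<Rightarrow> (real \<Rightarrow> real) \<Rightarrow> real \<Rightarrow> real" where
  "fdiffs k f = (fdiff ^^ k) f"

definition bweight :: "nat \<Rightarrow> real \<Rightarrow> nat \<Rightarrow> real" where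
  "bweight N p x = real (N choose x) * p ^ x * (1 - p) ^ (N - x)"

text \<open>Monic Kravchuk polynomial K_n, as a function of x.\<close>
definition kraw :: "nat \<Rightarrow> real \<Rightarrow> nat \<Rightarrow> real \<Rightarrow> real" where
  "kraw N p n x = p ^ n * pochhammer (- real N) n *
     (\<Sum>k=0..n. pochhammer (- real n) k * pochhammer (- x) k /
                 (pochhammer (- real N) k * fact k) * (1 / p) ^ k)"

definition kraw_norm2 :: "nat \<Rightarrow> real \<Rightarrow> nat \<Rightarrow> real" where
  "kraw_norm2 N p n = (\<Sum>x=0..N. (kraw N p n (real x))\<^sup>2 * bweight N p x)"

definition kraw_ker :: "nat \<Rightarrow> real \<Rightarrow> nat \<Rightarrow> nat \<Rightarrow> nat \<Rightarrow> real \<Rightarrow> real \<Rightarrow> real" where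
  "kraw_ker N p i l m x y =
     (\<Sum>k=0..m. fdiffs i (kraw N p k) x * fdiffs l (kraw N p k) y / kraw_norm2 N p k)"

definition sob_ip :: "nat \<Rightarrow> real \<Rightarrow> real \<Rightarrow> real \<Rightarrow> nat \<Rightarrow> real poly \<Rightarrow> real poly \<Rightarrow> real" where
  "sob_ip N p lam mu j f g =
     (\<Sum>x=0..N. poly f (real x) * poly g (real x) * bweight N p x)
     + lam * fdiffs j (poly f) 0 * fdiffs j (poly g) 0
     + mu * fdiffs j (poly f) (real N) * fdiffs j (poly g) (real N)"

definition calA :: "nat \<Rightarrow> real \<Rightarrow> nat \<Rightarrow> nat \<Rightarrow> real \<Rightarrow> real \<Rightarrow> real" where
  "calA N p j n x y =
     fact j / (kraw_norm2 N p (n - 1) * fall (x - y) (j + 1)) *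
     (\<Sum>k=0..j. fdiffs k (kraw N p (n - 1)) y / fact k * fall (x - y) k)"

definition calB :: "nat \<Rightarrow> real \<Rightarrow> nat \<Rightarrow> nat \<Rightarrow> real \<Rightarrow> real \<Rightarrow> real" where
  "calB N p j n x y =
     - (fact j / (kraw_norm2 N p (n - 1) * fall (x - y) (j + 1))) *
     (\<Sum>k=0..j. fdiffs k (kraw N p n) y / fact k * fall (x - y) k)"

definition delta_n :: "nat \<Rightarrow> real \<Rightarrow> real \<Rightarrow> real \<Rightarrow> nat \<Rightarrow> nat \<Rightarrow> real" where
  "delta_n N p lam mu j n =
     (1 + lam * kraw_ker N p j j (n - 1) 0 0) * (1 + mu * kraw_ker N p j j (n - 1) (real N) (real N))
     - lam * mu * kraw_ker N p j j (n - 1) 0 (real N) * kraw_ker N p j j (n - 1) (real N) 0"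

definition Phi1 :: "nat \<Rightarrow> real \<Rightarrow> real \<Rightarrow> real \<Rightarrow> nat \<Rightarrow> nat \<Rightarrow> real" where
  "Phi1 N p lam mu j n =
     (fdiffs j (kraw N p n) 0 * (1 + mu * kraw_ker N p j j (n - 1) (real N) (real N))
      - mu * kraw_ker N p j j (n - 1) 0 (real N) * fdiffs j (kraw N p n) (real N))
     / delta_n N p lam mu j n"

definition Phi2 :: "nat \<Rightarrow> real \<Rightarrow> real \<Rightarrow> real \<Rightarrow> nat \<Rightarrow> nat \<Rightarrow> real" where
  "Phi2 N p lam mu j n =
     ((1 + lam * kraw_ker N p j j (n - 1) 0 0) * fdiffs j (kraw N p n) (real N)
      - lam * kraw_ker N p j j (n - 1) (real N) 0 * fdiffs j (kraw N p n) 0)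
     / delta_n N p lam mu j n"

definition calC1 :: "nat \<Rightarrow> real \<Rightarrow> real \<Rightarrow> real \<Rightarrow> nat \<Rightarrow> nat \<Rightarrow> real \<Rightarrow> real" where
  "calC1 N p lam mu j n x =
     1 - lam * Phi1 N p lam mu j n * calA N p j n x 0
       - mu * Phi2 N p lam mu j n * calA N p j n x (real N)"

definition calD1 :: "nat \<Rightarrow> real \<Rightarrow> real \<Rightarrow> real \<Rightarrow> nat \<Rightarrow> nat \<Rightarrow> real \<Rightarrow> real" where
  "calD1 N p lam mu j n x =
     - lam * Phi1 N p lam mu j n * calB N p j n x 0
     - mu * Phi2 N p lam mu j n * calB N p j n x (real N)"

end

theory Submission
  imports Defs "HOL-Analysis.Convex"
begin

text \<open>
  Expand \<open>\<bbbK>\<^sub>n - K\<^sub>n\<close>, a polynomial of degree \<open>< n\<close>, in the orthogonal Kravchuk basis.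
  Sobolev orthogonality of \<open>\<bbbK>\<^sub>n\<close> against \<open>K\<^sub>k\<close> (\<open>k < n\<close>) turns the \<open>k\<close>-th Fourier coefficient
  into \<open>-\<lambda> \<Delta>\<^sup>j\<bbbK>\<^sub>n(0) \<Delta>\<^sup>jK\<^sub>k(0) - \<mu> \<Delta>\<^sup>j\<bbbK>\<^sub>n(N) \<Delta>\<^sup>jK\<^sub>k(N)\<close> (over \<open>\<parallel>K\<^sub>k\<parallel>\<^sup>2\<close>), which is the kernel
  representation with the two unknowns \<open>\<Delta>\<^sup>j\<bbbK>\<^sub>n(0)\<close>, \<open>\<Delta>\<^sup>j\<bbbK>\<^sub>n(N)\<close>. Applying \<open>\<Delta>\<^sup>j\<close> to it at
  \<open>0\<close> and \<open>N\<close> gives a \<open>2 \<times> 2\<close> linear system whose determinant is \<open>\<delta>\<^sub>n \<ge> 1\<close> by Cauchy--Schwarz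
  for the kernel; Cramer's rule yields \<open>\<Phi>\<^sub>1, \<Phi>\<^sub>2\<close>. Finally, by Christoffel--Darboux the kernel
  is \<open>F(y) / (x - y)\<close> with \<open>F\<close> a combination of \<open>K\<^sub>n, K\<^sub>n\<^sub>-\<^sub>1\<close>, and the discrete Leibniz rule for
  \<open>\<Delta>\<^sup>j\<^sub>y\<close> of this product produces \<open>\<A>\<^sub>n\<close> and \<open>\<B>\<^sub>n\<close>.
\<close>

lemma fall_0 [simp]: "fall z 0 = 1"
  by (simp add: fall_def)

lemma fall_Suc: "fall z (Suc k) = fall z k * (z - of_nat k)"
  by (simp add: fall_def lessThan_Suc mult.commute)

lemma fall_Suc_left: "fall z (Suc k) = z * fall (z - 1) k"
  unfolding fall_def prod.lessThan_Suc_shift by (simp add: algebra_simps)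

lemma fall_add: "fall z (k + l) = fall z k * fall (z - of_nat k) l"
  by (induction l) (auto simp: fall_Suc algebra_simps)

lemma fall_of_nat: "k \<le> x \<Longrightarrow> fall (real x) k = fact x / fact (x - k)"
proof -
  assume "k \<le> x"
  moreover have "k \<le> x \<Longrightarrow> fall (real x) k * fact (x - k) = fact x"
  proof (induction k)
    case (Suc k)
    then have "x - k = Suc (x - Suc k)" "real (x - k) = real x - real k" by simp_all
    then have "fact (x - k) = (real x - real k) * fact (x - Suc k)" by simp
    then show ?case using Suc by (simp add: fall_Suc)
  qed simp
  ultimately show ?thesis by (simp add: field_simps)
qed

lemma fall_of_nat_eq_0: "x < k \<Longrightarrow> fall (real x) k = 0"
  unfolding fall_def by (rule prod_zero) auto

lemma fall_of_nat_nonzero: "k \<le> x \<Longrightarrow> fall (real x) k \<noteq> 0"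
  by (simp add: fall_of_nat)

lemma fall_factor_nonzero: "fall z k \<noteq> 0 \<Longrightarrow> i < k \<Longrightarrow> z - of_nat i \<noteq> 0"
  unfolding fall_def by auto

lemma fall_diff_Suc: "fall z (Suc m) - fall (z - 1) (Suc m) = of_nat (Suc m) * fall (z - 1) m"
  by (simp add: fall_Suc_left[of z] fall_Suc[of "z - 1"] algebra_simps)

lemma pochhammer_minus_eq_fall: "pochhammer (- z) k = (-1) ^ k * fall z k"
proof -
  have "pochhammer (- z) k = (\<Prod>i<k. (-1) * (z - of_nat i))"
    by (simp add: pochhammer_prod atLeast0LessThan)
  then show ?thesis unfolding prod.distrib fall_def by simp
qed

section \<open>Forward differences\<close>

lemma fdiffs_0 [simp]: "fdiffs 0 f = f"
  by (simp add: fdiffs_def)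

lemma fdiffs_Suc: "fdiffs (Suc j) f x = fdiffs j f (x + 1) - fdiffs j f x"
  by (simp add: fdiffs_def fdiff_def)

lemma fdiffs_Suc_inner: "fdiffs (Suc j) f = fdiffs j (fdiff f)"
  by (simp only: fdiffs_def funpow_Suc_right comp_def)

lemma fdiffs_sum_mult:
  "fdiffs j (\<lambda>y. \<Sum>k\<in>S. c k * f k y) y0 = (\<Sum>k\<in>S. c k * fdiffs j (f k) y0)"
  by (induction j arbitrary: y0) (simp_all add: fdiffs_Suc sum_subtractf[symmetric] right_diff_distrib)

lemma fdiffs_add: "fdiffs j (\<lambda>y. f y + g y) y0 = fdiffs j f y0 + fdiffs j g y0"
  by (induction j arbitrary: y0) (simp_all add: fdiffs_Suc)

lemma fdiffs_diff: "fdiffs j (\<lambda>y. f y - g y) y0 = fdiffs j f y0 - fdiffs j g y0"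
  by (induction j arbitrary: y0) (simp_all add: fdiffs_Suc)

lemma fdiffs_cmult: "fdiffs j (\<lambda>y. c * f y) y0 = c * fdiffs j f y0"
  by (induction j arbitrary: y0) (simp_all add: fdiffs_Suc right_diff_distrib)

lemma fdiffs_shift: "fdiffs m (\<lambda>z. g (z + 1)) w = fdiffs m g (w + 1)"
  by (induction m arbitrary: w) (simp_all add: fdiffs_Suc)

lemma fdiffs_cong_nodes:
  "(\<And>i. i \<le> j \<Longrightarrow> f (y + of_nat i) = g (y + of_nat i)) \<Longrightarrow> fdiffs j f y = fdiffs j g y"
proof (induction j arbitrary: y)
  case 0
  then show ?case using 0[of 0] by simp
next
  case (Suc j)
  have "fdiffs j f (y + 1) = fdiffs j g (y + 1)"
    using Suc.prems[of "Suc _"] by (intro Suc.IH) (auto simp: add.assoc)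
  moreover have "fdiffs j f y = fdiffs j g y"
    using Suc.prems by (intro Suc.IH) auto
  ultimately show ?case by (simp add: fdiffs_Suc)
qed

lemma sum_choose_Suc_split:
  fixes t :: "nat \<Rightarrow> real"
  shows "(\<Sum>k=0..Suc j. real (Suc j choose k) * t k)
       = (\<Sum>k=0..j. real (j choose k) * t k) + (\<Sum>k=0..j. real (j choose k) * t (Suc k))"
proof -
  have "(\<Sum>k=0..Suc j. real (Suc j choose k) * t k)
       = t 0 + (\<Sum>k=0..j. real (j choose Suc k) * t (Suc k))
             + (\<Sum>k=0..j. real (j choose k) * t (Suc k))"
    by (subst sum.atLeast0_atMost_Suc_shift) (simp add: sum.distrib algebra_simps)
  also have "t 0 + (\<Sum>k=0..j. real (j choose Suc k) * t (Suc k))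
           = (\<Sum>k=0..Suc j. real (j choose k) * t k)"
    by (subst sum.atLeast0_atMost_Suc_shift) simp
  finally show ?thesis by simp
qed

lemma fdiffs_mult_leibniz:
  "fdiffs j (\<lambda>y. F y * g y) y
     = (\<Sum>k=0..j. real (j choose k) * (fdiffs k F y * fdiffs (j - k) g (y + of_nat k)))"
proof (induction j arbitrary: F g y)
  case (Suc j)
  have "fdiff (\<lambda>y. F y * g y) = (\<lambda>y. fdiff F y * g (y + 1) + F y * fdiff g y)"
    by (rule ext) (simp add: fdiff_def algebra_simps)
  then have "fdiffs (Suc j) (\<lambda>y. F y * g y) y
      = fdiffs j (\<lambda>y. fdiff F y * g (y + 1)) y + fdiffs j (\<lambda>y. F y * fdiff g y) y"
    by (simp add: fdiffs_Suc_inner fdiffs_add)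
  also have "fdiffs j (\<lambda>y. fdiff F y * g (y + 1)) y
      = (\<Sum>k=0..j. real (j choose k) *
           (fdiffs (Suc k) F y * fdiffs (Suc j - Suc k) g (y + of_nat (Suc k))))"
    unfolding Suc.IH[of "fdiff F"]
    by (intro sum.cong refl) (simp add: fdiffs_Suc_inner[symmetric] fdiffs_shift[where g=g] add_ac)
  also have "fdiffs j (\<lambda>y. F y * fdiff g y) y
      = (\<Sum>k=0..j. real (j choose k) * (fdiffs k F y * fdiffs (Suc j - k) g (y + of_nat k)))"
    unfolding Suc.IH[of F]
    by (intro sum.cong refl) (simp add: fdiffs_Suc_inner[symmetric] Suc_diff_le)
  finally show ?case
    by (subst sum_choose_Suc_split) simp
qed simp

lemma fdiffs_inverse_diff:
  "fall (x - z) (Suc m) \<noteq> 0 \<Longrightarrow> fdiffs m (\<lambda>z. 1 / (x - z)) z = fact m / fall (x - z) (Suc m)"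
proof (induction m arbitrary: z)
  case 0
  then show ?case using fall_Suc[of "x - z" 0] by simp
next
  case (Suc m)
  let ?C = "fall (x - z) (Suc (Suc m))"
  have C_right: "?C = fall (x - z) (Suc m) * (x - z - of_nat (Suc m))"
    by (rule fall_Suc)
  have C_left: "?C = (x - z) * fall (x - (z + 1)) (Suc m)"
    using fall_Suc_left[of "x - z" "Suc m"] by (simp add: algebra_simps)
  have nz: "fall (x - z) (Suc m) \<noteq> 0" "fall (x - (z + 1)) (Suc m) \<noteq> 0"
    and left_nz: "x - z \<noteq> 0" and right_nz: "x - z - of_nat (Suc m) \<noteq> 0"
    using Suc.prems C_right C_left by auto
  have "fact m / fall (x - (z + 1)) (Suc m) = fact m * (x - z) / ?C"
    unfolding C_left using left_nz by simp
  moreover have "fact m / fall (x - z) (Suc m) = fact m * (x - z - of_nat (Suc m)) / ?C"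
    unfolding C_right using right_nz by simp
  ultimately have "fdiffs (Suc m) (\<lambda>z. 1 / (x - z)) z
      = fact m * (x - z) / ?C - fact m * (x - z - of_nat (Suc m)) / ?C"
    by (simp add: fdiffs_Suc Suc.IH nz)
  also have "\<dots> = fact (Suc m) / ?C"
    by (simp add: diff_divide_distrib[symmetric] algebra_simps)
  finally show ?case .
qed

text \<open>The coefficient that the discrete Leibniz rule produces when one factor is \<open>1 / (x - y)\<close>.\<close>

lemma choose_mult_fdiffs_inverse_diff:
  assumes "k \<le> j" and "fall (x - y) (Suc j) \<noteq> 0"
  shows "real (j choose k) * fdiffs (j - k) (\<lambda>z. 1 / (x - z)) (y + of_nat k)
       = fact j / fall (x - y) (Suc j) * (fall (x - y) k / fact k)"
proof -
  have split: "fall (x - y) (Suc j) = fall (x - y) k * fall (x - y - of_nat k) (Suc (j - k))"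
    using fall_add[of "x - y" k "Suc (j - k)"] assms(1) by simp
  then have "fall (x - y) k \<noteq> 0" "fall (x - y - of_nat k) (Suc (j - k)) \<noteq> 0"
    using assms(2) by auto
  moreover have "real (j choose k) = fact j / (fact k * fact (j - k))"
    using assms(1) by (simp add: binomial_fact)
  ultimately show ?thesis
    using fdiffs_inverse_diff[of x "y + of_nat k" "j - k"]
    unfolding split by (simp add: algebra_simps)
qed

definition fall_poly :: "nat \<Rightarrow> real poly" where
  "fall_poly k = (\<Prod>i<k. [:- of_nat i, 1:])"

definition rev_fall_poly :: "nat \<Rightarrow> nat \<Rightarrow> real poly" where
  "rev_fall_poly N m = (\<Prod>i<m. [:real N - of_nat i, -1:])"

lemma poly_fall_poly: "poly (fall_poly k) x = fall x k"
  by (simp add: fall_poly_def poly_prod fall_def)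

lemma degree_fall_poly: "degree (fall_poly k) = k"
  unfolding fall_poly_def by (subst degree_prod_eq_sum_degree) auto

lemma lead_coeff_fall_poly: "lead_coeff (fall_poly k) = 1"
  unfolding fall_poly_def lead_coeff_prod by simp

lemma poly_rev_fall_poly: "poly (rev_fall_poly N m) x = fall (real N - x) m"
  by (simp add: rev_fall_poly_def poly_prod fall_def algebra_simps)

lemma degree_rev_fall_poly: "degree (rev_fall_poly N m) = m"
  unfolding rev_fall_poly_def by (subst degree_prod_eq_sum_degree) auto

lemma lead_coeff_rev_fall_poly_nonzero: "lead_coeff (rev_fall_poly N m) \<noteq> 0"
  unfolding rev_fall_poly_def lead_coeff_prod by simp

lemma poly_in_span_degree_basis:
  fixes G :: "nat \<Rightarrow> 'a::field poly"
  assumes "\<And>m. m \<le> d \<Longrightarrow> degree (G m) = m" "\<And>m. m \<le> d \<Longrightarrow> lead_coeff (G m) \<noteq> 0"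
    and "degree q \<le> d"
  shows "\<exists>a. q = (\<Sum>m\<le>d. smult (a m) (G m))"
  using assms
proof (induction d arbitrary: q)
  case 0
  then have "degree (G 0) = 0" "coeff (G 0) 0 \<noteq> 0" "degree q = 0" by auto
  then have "q = smult (coeff q 0 / coeff (G 0) 0) (G 0)"
    by (auto elim!: degree_eq_zeroE)
  then show ?case by (intro exI[of _ "\<lambda>_. coeff q 0 / coeff (G 0) 0"]) simp
next
  case (Suc d)
  define c where "c = coeff q (Suc d) / lead_coeff (G (Suc d))"
  define r where "r = q - smult c (G (Suc d))"
  have G: "degree (G (Suc d)) = Suc d" "lead_coeff (G (Suc d)) \<noteq> 0"
    using Suc.prems by auto
  have "degree r \<le> d"
  proof (rule degree_le, intro allI impI)
    fix i assume "d < i"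
    then consider "i = Suc d" | "i > Suc d" by linarith
    then show "coeff r i = 0"
      by cases (use G Suc.prems(3) in \<open>simp_all add: r_def c_def coeff_eq_0\<close>)
  qed
  then obtain a where a: "r = (\<Sum>m\<le>d. smult (a m) (G m))"
    using Suc.IH[of r] Suc.prems by auto
  have "q = r + smult c (G (Suc d))" by (simp add: r_def)
  also have "\<dots> = (\<Sum>m\<le>Suc d. smult ((a(Suc d := c)) m) (G m))"
    unfolding a by (simp add: sum.atMost_Suc)
  finally show ?case by blast
qed

lemma degree_diff_less_same_lead:
  fixes a b :: "'a::ring poly"
  assumes "degree a = n" "degree b = n" "lead_coeff a = lead_coeff b" "a \<noteq> b"
  shows "degree (a - b) < n"
proof -
  have "degree (a - b) \<le> n"
    using assms by (intro degree_diff_le) simp_all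
  moreover have "degree (a - b) \<noteq> n"
  proof
    assume "degree (a - b) = n"
    then have "coeff (a - b) n \<noteq> 0"
      using assms(4) by (metis diff_eq_eq leading_coeff_0_iff add.left_neutral)
    then show False using assms(1-3) by simp
  qed
  ultimately show ?thesis by simp
qed

definition kraw_coeff :: "nat \<Rightarrow> real \<Rightarrow> nat \<Rightarrow> nat \<Rightarrow> real" where
  "kraw_coeff N p n k = p ^ n * pochhammer (- real N) n *
     (pochhammer (- real n) k / (pochhammer (- real N) k * fact k) * (1 / p) ^ k * (-1) ^ k)"

definition kraw_poly :: "nat \<Rightarrow> real \<Rightarrow> nat \<Rightarrow> real poly" where
  "kraw_poly N p n = (\<Sum>k=0..n. smult (kraw_coeff N p n k) (fall_poly k))"

lemma kraw_eq_sum_fall: "kraw N p n x = (\<Sum>k=0..n. kraw_coeff N p n k * fall x k)"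
  unfolding kraw_def kraw_coeff_def sum_distrib_left
  by (intro sum.cong refl) (simp add: pochhammer_minus_eq_fall)

lemma poly_kraw_poly: "poly (kraw_poly N p n) = kraw N p n"
  by (rule ext) (simp add: kraw_poly_def poly_sum poly_fall_poly kraw_eq_sum_fall)

lemma pochhammer_minus_of_nat_nonzero: "n \<le> N \<Longrightarrow> pochhammer (- real N) n \<noteq> 0"
  by (simp add: pochhammer_minus_eq_fall fall_of_nat_nonzero)

lemma kraw_coeff_top:
  assumes "n \<le> N" "p > 0"
  shows "kraw_coeff N p n n = 1"
proof -
  have "pochhammer (- real n) n = (-1)^n * fact n"
    by (simp add: pochhammer_minus_eq_fall fall_of_nat)
  then show ?thesis using pochhammer_minus_of_nat_nonzero[OF assms(1)] assms(2)
    by (simp add: kraw_coeff_def power_one_over field_simps flip: power_mult_distrib)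
qed

lemma coeff_kraw_poly_top:
  assumes "n \<le> N" "p > 0"
  shows "coeff (kraw_poly N p n) n = 1"
proof -
  have "coeff (kraw_poly N p n) n = (\<Sum>k=0..n. kraw_coeff N p n k * coeff (fall_poly k) n)"
    by (simp add: kraw_poly_def coeff_sum)
  also have "\<dots> = kraw_coeff N p n n * coeff (fall_poly n) n"
    by (subst sum.remove[of _ n]) (auto simp: coeff_eq_0 degree_fall_poly intro!: sum.neutral)
  finally show ?thesis
    using kraw_coeff_top[OF assms] lead_coeff_fall_poly[of n] by (simp add: degree_fall_poly)
qed

lemma degree_kraw_poly:
  assumes "n \<le> N" "p > 0"
  shows "degree (kraw_poly N p n) = n"
proof (rule antisym)
  show "degree (kraw_poly N p n) \<le> n"
    unfolding kraw_poly_def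
    by (rule degree_sum_le) (auto intro: order.trans[OF degree_smult_le] simp: degree_fall_poly)
  show "n \<le> degree (kraw_poly N p n)"
    using coeff_kraw_poly_top[OF assms] by (intro le_degree) simp
qed

lemma lead_coeff_kraw_poly: "n \<le> N \<Longrightarrow> p > 0 \<Longrightarrow> lead_coeff (kraw_poly N p n) = 1"
  using coeff_kraw_poly_top degree_kraw_poly by simp

section \<open>Orthogonality\<close>

lemma alternating_choose_fall_sum_eq_0:
  "m < n \<Longrightarrow> (\<Sum>k=0..n. real (n choose k) * ((-1)^k * fall (M - real k) m)) = 0"
proof (induction n arbitrary: m M)
  case (Suc n)
  have "(\<Sum>k=0..Suc n. real (Suc n choose k) * ((-1)^k * fall (M - real k) m))
     = (\<Sum>k=0..n. real (n choose k) * ((-1)^k * (fall (M - real k) m - fall (M - real k - 1) m)))"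
    by (subst sum_choose_Suc_split) (simp add: sum.distrib[symmetric] algebra_simps)
  also have "\<dots> = 0"
  proof (cases m)
    case (Suc m')
    have "(\<Sum>k=0..n. real (n choose k) * ((-1)^k * (fall (M - real k) m - fall (M - real k - 1) m)))
       = real (Suc m') * (\<Sum>k=0..n. real (n choose k) * ((-1)^k * fall ((M - 1) - real k) m'))"
      unfolding Suc fall_diff_Suc sum_distrib_left by (intro sum.cong refl) (simp add: algebra_simps)
    then show ?thesis using Suc.IH[of m' "M - 1"] Suc.prems Suc by simp
  qed simp
  finally show ?case .
qed simp

lemma fall_diff_of_nat_eq_0: "x \<le> N \<Longrightarrow> N - x < m \<Longrightarrow> fall (real N - real x) m = 0"
  using fall_of_nat_eq_0[of "N - x" m] by (simp add: of_nat_diff)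

lemma binomial_fall_moment:
  fixes p :: real
  shows "(\<Sum>x=0..N. fall (real x) k * fall (real N - real x) m * bweight N p x)
       = fall (real N) (k + m) * p ^ k * (1 - p) ^ m"
proof (cases "k + m \<le> N")
  case False
  then have "fall (real x) k * fall (real N - real x) m = 0" if "x \<le> N" for x
    using that by (cases "x < k") (simp_all add: fall_of_nat_eq_0 fall_diff_of_nat_eq_0)
  moreover have "fall (real N) (k + m) = 0" using False by (simp add: fall_of_nat_eq_0)
  ultimately show ?thesis by (simp add: sum.neutral)
next
  case True
  then have "N = (N - k - m) + k + m" by simp
  then obtain M where NM: "N = M + k + m" by blast
  let ?f = "\<lambda>x. fall (real x) k * fall (real N - real x) m * bweight N p x"
  have "(\<Sum>x=0..N. ?f x) = (\<Sum>x=0+k..M+k. ?f x)"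
  proof (rule sum.mono_neutral_right)
    show "\<forall>x\<in>{0..N} - {0+k..M+k}. ?f x = 0"
    proof
      fix x assume x: "x \<in> {0..N} - {0+k..M+k}"
      show "?f x = 0"
      proof (cases "x < k")
        case False
        then have "x \<le> N" "N - x < m" using x NM by auto
        then show ?thesis by (simp add: fall_diff_of_nat_eq_0)
      qed (simp add: fall_of_nat_eq_0)
    qed
  qed (use NM in auto)
  also have "\<dots> = (\<Sum>y=0..M. ?f (y + k))" by (rule sum.shift_bounds_cl_nat_ivl)
  also have "\<dots> = (\<Sum>y=0..M. fall (real N) (k + m) * p ^ k * (1 - p) ^ m *
                      (real (M choose y) * p ^ y * (1 - p) ^ (M - y)))"
  proof (intro sum.cong refl)
    fix y assume "y \<in> {0..M}"
    then have y: "y \<le> M" by simp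
    have e1: "real N - real (y + k) = real (M - y + m)" using y NM by (simp add: of_nat_diff)
    have e2: "N - (y + k) = M - y + m" using y NM by simp
    have f1: "fall (real (y + k)) k = fact (y + k) / fact y" using fall_of_nat[of k "y + k"] by simp
    have f2: "fall (real (M - y + m)) m = fact (M - y + m) / fact (M - y)"
      using fall_of_nat[of m "M - y + m"] by simp
    have f3: "fall (real N) (k + m) = fact N / fact M" using NM fall_of_nat[of "k + m" N] by simp
    have b1: "real (N choose (y + k)) = fact N / (fact (y + k) * fact (M - y + m))"
      using y NM by (simp add: binomial_fact e2[symmetric])
    have b2: "real (M choose y) = fact M / (fact y * fact (M - y))"
      using y by (simp add: binomial_fact)
    show "?f (y + k) = fall (real N) (k + m) * p ^ k * (1 - p) ^ m *
                      (real (M choose y) * p ^ y * (1 - p) ^ (M - y))"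
      unfolding bweight_def e1 e2 f1 f2 f3 b1 b2 by (simp add: field_simps power_add)
  qed
  also have "\<dots> = fall (real N) (k + m) * p ^ k * (1 - p) ^ m * (p + (1 - p)) ^ M"
    unfolding binomial_ring[of p "1 - p" M] sum_distrib_left atLeast0AtMost by (simp add: mult.assoc)
  finally show ?thesis by simp
qed

text \<open>The binomial moments reduce this inner product to an \<open>n\<close>-th alternating difference of a
  polynomial of degree \<open>m < n\<close>.\<close>

lemma kraw_orthogonal_rev_fall:
  assumes "m < n" "n \<le> N" "p > 0"
  shows "(\<Sum>x=0..N. kraw N p n (real x) * fall (real N - real x) m * bweight N p x) = 0"
proof -
  let ?A = "p ^ n * pochhammer (- real N) n"
  have "(\<Sum>x=0..N. kraw N p n (real x) * fall (real N - real x) m * bweight N p x)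
     = (\<Sum>k=0..n. kraw_coeff N p n k *
          (\<Sum>x=0..N. fall (real x) k * fall (real N - real x) m * bweight N p x))"
    unfolding kraw_eq_sum_fall sum_distrib_left sum_distrib_right
    by (subst sum.swap) (simp add: algebra_simps)
  also have "\<dots> = (\<Sum>k=0..n. ?A * (1 - p) ^ m *
                      (real (n choose k) * ((-1)^k * fall (real N - real k) m)))"
    unfolding binomial_fall_moment
  proof (intro sum.cong refl)
    fix k assume "k \<in> {0..n}"
    then have k: "k \<le> n" by simp
    have "fall (real N) k \<noteq> 0" using k assms by (simp add: fall_of_nat_nonzero)
    then have q: "pochhammer (- real n) k / (pochhammer (- real N) k * fact k) * fall (real N) k
        = real (n choose k)"
      using k by (simp add: pochhammer_minus_eq_fall binomial_fact fall_of_nat)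
    have "(1 / p) ^ k * p ^ k = 1" using assms by (simp add: power_one_over field_simps)
    then have "kraw_coeff N p n k * fall (real N) k * p ^ k = ?A * ((-1)^k * real (n choose k))"
      unfolding kraw_coeff_def
      by (simp add: mult.assoc mult.left_commute[of "fall (real N) k"] mult.left_commute[of "p ^ k"]
          flip: q)
    then show "kraw_coeff N p n k * (fall (real N) (k + m) * p ^ k * (1 - p) ^ m)
        = ?A * (1 - p) ^ m * (real (n choose k) * ((-1)^k * fall (real N - real k) m))"
      unfolding fall_add by (simp add: ac_simps)
  qed
  also have "\<dots> = 0"
    using alternating_choose_fall_sum_eq_0[OF assms(1)] by (simp flip: sum_distrib_left)
  finally show ?thesis .
qed

lemma kraw_orthogonal_low_degree:
  assumes "degree q < n" "n \<le> N" "p > 0"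
  shows "(\<Sum>x=0..N. kraw N p n (real x) * poly q (real x) * bweight N p x) = 0"
proof -
  have "\<exists>a. q = (\<Sum>m\<le>n-1. smult (a m) (rev_fall_poly N m))"
    using assms(1)
    by (intro poly_in_span_degree_basis degree_rev_fall_poly lead_coeff_rev_fall_poly_nonzero) simp
  then obtain a where a: "q = (\<Sum>m\<le>n-1. smult (a m) (rev_fall_poly N m))" ..
  have "(\<Sum>x=0..N. kraw N p n (real x) * poly q (real x) * bweight N p x)
      = (\<Sum>m\<le>n-1. a m *
           (\<Sum>x=0..N. kraw N p n (real x) * fall (real N - real x) m * bweight N p x))"
    unfolding a poly_sum poly_smult poly_rev_fall_poly sum_distrib_left sum_distrib_right
    by (subst sum.swap) (simp add: algebra_simps)
  also have "\<dots> = 0"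
    using assms by (intro sum.neutral ballI) (simp add: kraw_orthogonal_rev_fall)
  finally show ?thesis .
qed

lemma kraw_orthogonal:
  assumes "k \<noteq> i" "k \<le> N" "i \<le> N" "p > 0"
  shows "(\<Sum>x=0..N. kraw N p k (real x) * kraw N p i (real x) * bweight N p x) = 0"
proof (cases "i < k")
  case True
  then show ?thesis using kraw_orthogonal_low_degree[of "kraw_poly N p i" k N p] assms
    by (simp add: degree_kraw_poly poly_kraw_poly)
next
  case False
  then have "(\<Sum>x=0..N. kraw N p i (real x) * kraw N p k (real x) * bweight N p x) = 0"
    using kraw_orthogonal_low_degree[of "kraw_poly N p k" i N p] assms
    by (simp add: degree_kraw_poly poly_kraw_poly)
  then show ?thesis by (simp add: ac_simps)
qed

lemma kraw_inner_monic:
  assumes "degree q = n" "lead_coeff q = 1" "n \<le> N" "p > 0"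
  shows "(\<Sum>x=0..N. kraw N p n (real x) * poly q (real x) * bweight N p x) = kraw_norm2 N p n"
proof -
  let ?r = "q - kraw_poly N p n"
  have "(\<Sum>x=0..N. kraw N p n (real x) * poly ?r (real x) * bweight N p x) = 0"
  proof (cases "?r = 0")
    case False
    then have "degree ?r < n"
      using assms by (intro degree_diff_less_same_lead) (simp_all add: degree_kraw_poly coeff_kraw_poly_top)
    then show ?thesis using assms by (intro kraw_orthogonal_low_degree)
  qed simp
  then show ?thesis
    by (simp add: kraw_norm2_def poly_kraw_poly power2_eq_square algebra_simps sum_subtractf)
qed

lemma bweight_nonneg: "0 \<le> p \<Longrightarrow> p \<le> 1 \<Longrightarrow> 0 \<le> bweight N p x"
  by (simp add: bweight_def)

lemma bweight_pos: "0 < p \<Longrightarrow> p < 1 \<Longrightarrow> x \<le> N \<Longrightarrow> 0 < bweight N p x"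
  by (simp add: bweight_def)

lemma kraw_norm2_nonneg: "0 \<le> p \<Longrightarrow> p \<le> 1 \<Longrightarrow> 0 \<le> kraw_norm2 N p k"
  unfolding kraw_norm2_def by (intro sum_nonneg mult_nonneg_nonneg bweight_nonneg) simp_all

text \<open>A nonzero polynomial of degree \<open>k \<le> N\<close> cannot vanish at all \<open>N + 1\<close> nodes.\<close>

lemma kraw_norm2_pos:
  assumes "k \<le> N" "0 < p" "p < 1"
  shows "0 < kraw_norm2 N p k"
proof (rule ccontr)
  assume "\<not> 0 < kraw_norm2 N p k"
  then have "kraw_norm2 N p k = 0"
    using kraw_norm2_nonneg[of p N k] assms by simp
  then have "\<forall>x\<in>{0..N}. (kraw N p k (real x))\<^sup>2 * bweight N p x = 0"
    unfolding kraw_norm2_def using assms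
    by (subst (asm) sum_nonneg_eq_0_iff) (auto intro!: mult_nonneg_nonneg bweight_nonneg)
  then have "kraw N p k (real x) = 0" if "x \<le> N" for x
    using that assms bweight_pos[of p x N] by auto
  then have roots: "real ` {0..N} \<subseteq> {x. poly (kraw_poly N p k) x = 0}"
    by (auto simp: poly_kraw_poly)
  have nz: "kraw_poly N p k \<noteq> 0" using lead_coeff_kraw_poly[OF assms(1,2)] by auto
  have "Suc N = card (real ` {0..N})" by (simp add: card_image inj_on_def)
  also have "\<dots> \<le> card {x. poly (kraw_poly N p k) x = 0}"
    by (rule card_mono[OF poly_roots_finite[OF nz] roots])
  also have "\<dots> \<le> degree (kraw_poly N p k)" by (rule card_poly_roots_bound[OF nz])
  finally show False using degree_kraw_poly[OF assms(1,2)] assms(1) by simp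
qed

lemma poly_kraw_fourier_expansion:
  assumes "degree q \<le> d" "d \<le> N" "0 < p" "p < 1"
  shows "poly q x = (\<Sum>k=0..d. (\<Sum>y=0..N. poly q (real y) * kraw N p k (real y) * bweight N p y)
                               / kraw_norm2 N p k * kraw N p k x)"
proof -
  have "\<exists>a. q = (\<Sum>m\<le>d. smult (a m) (kraw_poly N p m))"
    using assms by (intro poly_in_span_degree_basis) (simp_all add: degree_kraw_poly coeff_kraw_poly_top)
  then obtain a where a: "q = (\<Sum>m\<le>d. smult (a m) (kraw_poly N p m))" ..
  have "(\<Sum>y=0..N. poly q (real y) * kraw N p k (real y) * bweight N p y) = a k * kraw_norm2 N p k"
    if k: "k \<le> d" for k
  proof -
    have "(\<Sum>y=0..N. poly q (real y) * kraw N p k (real y) * bweight N p y)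
        = (\<Sum>m\<le>d. a m * (\<Sum>y=0..N. kraw N p m (real y) * kraw N p k (real y) * bweight N p y))"
      unfolding a poly_sum poly_smult poly_kraw_poly sum_distrib_left sum_distrib_right
      by (subst sum.swap) (simp add: algebra_simps)
    also have "\<dots> = a k * (\<Sum>y=0..N. kraw N p k (real y) * kraw N p k (real y) * bweight N p y)"
      using k assms by (subst sum.remove[of _ k]) (auto intro!: sum.neutral simp: kraw_orthogonal)
    finally show ?thesis by (simp add: kraw_norm2_def power2_eq_square)
  qed
  moreover have "kraw_norm2 N p k \<noteq> 0" if "k \<le> d" for k
    using that assms kraw_norm2_pos[of k N p] by simp
  ultimately show ?thesis
    unfolding a poly_sum poly_smult poly_kraw_poly atLeast0AtMost by (intro sum.cong refl) simp
qed

section \<open>Three-term recurrence and Christoffel--Darboux formula\<close>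

lemma kraw_inner_times_x:
  assumes "i < k" "k \<le> N" "0 < p"
  shows "(\<Sum>y=0..N. kraw N p k (real y) * (real y * kraw N p i (real y)) * bweight N p y)
       = (if Suc i = k then kraw_norm2 N p k else 0)"
proof -
  let ?q = "pCons 0 (kraw_poly N p i)"
  have "kraw_poly N p i \<noteq> 0"
    using assms lead_coeff_kraw_poly[of i N p] by auto
  then have q: "degree ?q = Suc i" "lead_coeff ?q = 1"
    using assms by (simp_all add: degree_kraw_poly coeff_kraw_poly_top)
  show ?thesis
  proof (cases "Suc i = k")
    case True
    then show ?thesis
      using kraw_inner_monic[OF q(1)[unfolded True] q(2) assms(2,3)] by (simp add: poly_kraw_poly)
  next
    case False
    then have "degree ?q < k" using q(1) assms(1) by simp
    from kraw_orthogonal_low_degree[OF this assms(2,3)] show ?thesis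
      using False by (simp add: poly_kraw_poly)
  qed
qed

lemma kraw_three_term:
  assumes "Suc k \<le> N" "0 < p" "p < 1"
  obtains b where "\<And>x. x * kraw N p k x = kraw N p (Suc k) x + b * kraw N p k x
      + (if k = 0 then 0 else kraw_norm2 N p k / kraw_norm2 N p (k - 1) * kraw N p (k - 1) x)"
proof -
  define r where "r = pCons 0 (kraw_poly N p k) - kraw_poly N p (Suc k)"
  have poly_r: "poly r x = x * kraw N p k x - kraw N p (Suc k) x" for x
    by (simp add: r_def poly_kraw_poly)
  have "degree r \<le> k"
  proof (cases "r = 0")
    case False
    have "kraw_poly N p k \<noteq> 0"
      using assms lead_coeff_kraw_poly[of k N p] by auto
    then show ?thesis using False assms unfolding r_def
      by (intro less_Suc_eq_le[THEN iffD1] degree_diff_less_same_lead)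
         (simp_all add: degree_kraw_poly coeff_kraw_poly_top)
  qed simp
  define c where "c i = (\<Sum>y=0..N. poly r (real y) * kraw N p i (real y) * bweight N p y)" for i
  have expansion: "poly r x = (\<Sum>i=0..k. c i / kraw_norm2 N p i * kraw N p i x)" for x
    unfolding c_def using poly_kraw_fourier_expansion[OF \<open>degree r \<le> k\<close>] assms by simp
  have c: "c i = (if i = k - 1 then kraw_norm2 N p k else 0)" if "i < k" for i
  proof -
    have "(\<Sum>y=0..N. kraw N p (Suc k) (real y) * kraw N p i (real y) * bweight N p y) = 0"
      using that assms by (intro kraw_orthogonal) auto
    then have "c i = (\<Sum>y=0..N. kraw N p k (real y) * (real y * kraw N p i (real y)) * bweight N p y)"
      unfolding c_def poly_r by (simp add: algebra_simps sum_subtractf)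
    then show ?thesis
      using that assms kraw_inner_times_x[of i k N p] by auto
  qed
  show thesis
  proof (rule that)
    fix x
    have "poly r x = (\<Sum>i\<in>{0..<k}. c i / kraw_norm2 N p i * kraw N p i x)
        + c k / kraw_norm2 N p k * kraw N p k x"
      unfolding expansion by (simp add: atLeastLessThanSuc_atLeastAtMost[symmetric])
    also have "(\<Sum>i\<in>{0..<k}. c i / kraw_norm2 N p i * kraw N p i x)
        = (\<Sum>i\<in>{0..<k}. if i = k - 1
             then kraw_norm2 N p k / kraw_norm2 N p (k - 1) * kraw N p (k - 1) x else 0)"
      by (intro sum.cong refl) (simp add: c)
    finally show "x * kraw N p k x = kraw N p (Suc k) x + c k / kraw_norm2 N p k * kraw N p k x
        + (if k = 0 then 0 else kraw_norm2 N p k / kraw_norm2 N p (k - 1) * kraw N p (k - 1) x)"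
      unfolding poly_r by (cases k) (auto simp: sum.delta)
  qed
qed

lemma kraw_christoffel_darboux:
  assumes "m < N" "0 < p" "p < 1"
  shows "(x - y) * kraw_ker N p 0 0 m x y
       = (kraw N p (Suc m) x * kraw N p m y - kraw N p m x * kraw N p (Suc m) y) / kraw_norm2 N p m"
  using assms(1)
proof (induction m)
  case 0
  obtain b where b: "\<And>x. x * kraw N p 0 x = kraw N p 1 x + b * kraw N p 0 x"
    using kraw_three_term[of 0 N p] 0 assms by auto
  have "(x - y) * kraw N p 0 x * kraw N p 0 y
      = (x * kraw N p 0 x) * kraw N p 0 y - kraw N p 0 x * (y * kraw N p 0 y)"
    by (simp add: algebra_simps)
  then show ?case unfolding kraw_ker_def b by (simp add: algebra_simps)
next
  case (Suc m)
  let ?h0 = "kraw_norm2 N p m" and ?h1 = "kraw_norm2 N p (Suc m)"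
  let ?A0 = "kraw N p m x" and ?A1 = "kraw N p (Suc m) x" and ?A2 = "kraw N p (Suc (Suc m)) x"
  let ?B0 = "kraw N p m y" and ?B1 = "kraw N p (Suc m) y" and ?B2 = "kraw N p (Suc (Suc m)) y"
  have h: "?h0 > 0" "?h1 > 0" using Suc.prems assms kraw_norm2_pos by auto
  obtain b where b: "\<And>x. x * kraw N p (Suc m) x
      = kraw N p (Suc (Suc m)) x + b * kraw N p (Suc m) x + ?h1 / ?h0 * kraw N p m x"
    using kraw_three_term[of "Suc m" N p] Suc.prems assms by auto
  have "(x - y) * ?A1 * ?B1 = (x * ?A1) * ?B1 - ?A1 * (y * ?B1)" by (simp add: algebra_simps)
  also have "\<dots> = ?A2 * ?B1 - ?A1 * ?B2 + ?h1 / ?h0 * (?A0 * ?B1 - ?A1 * ?B0)"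
    unfolding b by (simp add: algebra_simps)
  finally have step: "(x - y) * ?A1 * ?B1 = ?A2 * ?B1 - ?A1 * ?B2 + ?h1 / ?h0 * (?A0 * ?B1 - ?A1 * ?B0)" .
  have "(x - y) * kraw_ker N p 0 0 (Suc m) x y
      = (?A1 * ?B0 - ?A0 * ?B1) / ?h0 + (x - y) * ?A1 * ?B1 / ?h1"
    using Suc.IH Suc.prems by (simp add: kraw_ker_def algebra_simps)
  also have "\<dots> = (?A2 * ?B1 - ?A1 * ?B2) / ?h1"
    unfolding step using h by (simp add: field_simps)
  finally show ?case .
qed

lemma fdiffs_kraw_ker_left: "fdiffs i (\<lambda>x. kraw_ker N p 0 l m x y) x = kraw_ker N p i l m x y"
proof -
  have "fdiffs i (\<lambda>x. kraw_ker N p 0 l m x y) x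
      = fdiffs i (\<lambda>x. \<Sum>k\<in>{0..m}. (fdiffs l (kraw N p k) y / kraw_norm2 N p k) * kraw N p k x) x"
    by (simp add: kraw_ker_def ac_simps)
  also have "\<dots> = kraw_ker N p i l m x y"
    unfolding fdiffs_sum_mult kraw_ker_def by (simp add: ac_simps)
  finally show ?thesis .
qed

lemma kraw_ker_eq_fdiffs_right: "kraw_ker N p i l m x y = fdiffs l (\<lambda>y. kraw_ker N p i 0 m x y) y"
proof -
  have "fdiffs l (\<lambda>y. kraw_ker N p i 0 m x y) y
      = fdiffs l (\<lambda>y. \<Sum>k\<in>{0..m}. (fdiffs i (kraw N p k) x / kraw_norm2 N p k) * kraw N p k y) y"
    by (simp add: kraw_ker_def ac_simps)
  also have "\<dots> = kraw_ker N p i l m x y"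
    unfolding fdiffs_sum_mult kraw_ker_def by (simp add: ac_simps)
  finally show ?thesis by simp
qed

lemma kraw_ker_eq_calA_calB:
  assumes "1 \<le> n" "n \<le> N" "0 < p" "p < 1" and nz: "fall (x - y) (Suc j) \<noteq> 0"
  shows "kraw_ker N p 0 j (n - 1) x y
       = calA N p j n x y * kraw N p n x + calB N p j n x y * kraw N p (n - 1) x"
proof -
  let ?h = "kraw_norm2 N p (n - 1)"
  define F where "F z = kraw N p n x / ?h * kraw N p (n - 1) z - kraw N p (n - 1) x / ?h * kraw N p n z"
    for z
  have "kraw_ker N p 0 j (n - 1) x y = fdiffs j (\<lambda>z. F z * (1 / (x - z))) y"
    unfolding kraw_ker_eq_fdiffs_right[of N p 0 j]
  proof (rule fdiffs_cong_nodes)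
    fix i assume "i \<le> j"
    let ?y = "y + of_nat i"
    have "x - ?y \<noteq> 0"
      using fall_factor_nonzero[OF nz, of i] \<open>i \<le> j\<close> by (simp add: algebra_simps)
    then have "kraw_ker N p 0 0 (n - 1) x ?y = (x - ?y) * kraw_ker N p 0 0 (n - 1) x ?y / (x - ?y)"
      by simp
    also have "(x - ?y) * kraw_ker N p 0 0 (n - 1) x ?y
        = (kraw N p n x * kraw N p (n - 1) ?y - kraw N p (n - 1) x * kraw N p n ?y) / ?h"
      using kraw_christoffel_darboux[of "n - 1" N p x ?y] assms by simp
    finally show "kraw_ker N p 0 0 (n - 1) x ?y = F ?y * (1 / (x - ?y))"
      unfolding F_def by (simp add: diff_divide_distrib)
  qed
  also have "\<dots> = (\<Sum>k=0..j. fdiffs k F y *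
                     (real (j choose k) * fdiffs (j - k) (\<lambda>z. 1 / (x - z)) (y + of_nat k)))"
    unfolding fdiffs_mult_leibniz by (simp add: ac_simps)
  also have "\<dots> = (\<Sum>k=0..j. fdiffs k F y * (fact j / fall (x - y) (Suc j) * (fall (x - y) k / fact k)))"
    using nz by (intro sum.cong refl) (simp add: choose_mult_fdiffs_inverse_diff)
  also have "\<dots> = calA N p j n x y * kraw N p n x + calB N p j n x y * kraw N p (n - 1) x"
    unfolding calA_def calB_def F_def fdiffs_diff fdiffs_cmult
    by (simp add: sum_distrib_left sum_distrib_right sum_subtractf sum_negf algebra_simps)
  finally show ?thesis .
qed

lemma kraw_ker_swap: "kraw_ker N p i l m x y = kraw_ker N p l i m y x"
  unfolding kraw_ker_def by (simp add: ac_simps)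

lemma kraw_ker_diag_nonneg: "0 \<le> p \<Longrightarrow> p \<le> 1 \<Longrightarrow> 0 \<le> kraw_ker N p i i m x x"
  unfolding kraw_ker_def by (intro sum_nonneg divide_nonneg_nonneg kraw_norm2_nonneg) simp_all

lemma kraw_ker_cauchy_schwarz:
  assumes "0 \<le> p" "p \<le> 1"
  shows "(kraw_ker N p i l m x y)\<^sup>2 \<le> kraw_ker N p i i m x x * kraw_ker N p l l m y y"
proof -
  define a where "a k = fdiffs i (kraw N p k) x / sqrt (kraw_norm2 N p k)" for k
  define b where "b k = fdiffs l (kraw N p k) y / sqrt (kraw_norm2 N p k)" for k
  have "kraw_ker N p i l m x y = (\<Sum>k=0..m. a k * b k)"
    "kraw_ker N p i i m x x = (\<Sum>k=0..m. (a k)\<^sup>2)" "kraw_ker N p l l m y y = (\<Sum>k=0..m. (b k)\<^sup>2)"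
    unfolding kraw_ker_def a_def b_def by (simp_all add: power2_eq_square kraw_norm2_nonneg[OF assms])
  then show ?thesis using Cauchy_Schwarz_ineq_sum[of a b "{0..m}"] by simp
qed

section \<open>Kravchuk--Sobolev polynomials\<close>

lemma delta_n_ge_1:
  assumes "0 \<le> p" "p \<le> 1" "0 \<le> lam" "0 \<le> mu"
  shows "1 \<le> delta_n N p lam mu j n"
proof -
  let ?a = "kraw_ker N p j j (n - 1) 0 0" and ?b = "kraw_ker N p j j (n - 1) 0 (real N)"
    and ?c = "kraw_ker N p j j (n - 1) (real N) (real N)"
  have "?b\<^sup>2 \<le> ?a * ?c" "0 \<le> ?a" "0 \<le> ?c"
    using assms by (simp_all add: kraw_ker_cauchy_schwarz kraw_ker_diag_nonneg)
  moreover have "delta_n N p lam mu j n = 1 + lam * ?a + mu * ?c + lam * mu * (?a * ?c - ?b\<^sup>2)"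
    unfolding delta_n_def kraw_ker_swap[of N p j j "n - 1" "real N" 0]
    by (simp add: power2_eq_square algebra_simps)
  ultimately show ?thesis using assms by (simp add: mult_nonneg_nonneg)
qed

lemma linear_2x2_solve:
  fixes s t :: real
  assumes "s = u - lam * s * a - mu * t * b" and "t = v - lam * s * c - mu * t * d"
    and "(1 + lam * a) * (1 + mu * d) - lam * mu * b * c \<noteq> 0"
  shows "s = (u * (1 + mu * d) - mu * b * v) / ((1 + lam * a) * (1 + mu * d) - lam * mu * b * c)"
    and "t = ((1 + lam * a) * v - lam * c * u) / ((1 + lam * a) * (1 + mu * d) - lam * mu * b * c)"
proof -
  have u: "u = s + lam * s * a + mu * t * b" and v: "v = t + lam * s * c + mu * t * d"
    using assms(1,2) by linarith+
  show "s = (u * (1 + mu * d) - mu * b * v) / ((1 + lam * a) * (1 + mu * d) - lam * mu * b * c)"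
    and "t = ((1 + lam * a) * v - lam * c * u) / ((1 + lam * a) * (1 + mu * d) - lam * mu * b * c)"
    unfolding eq_divide_eq using assms(3) by (simp_all add: u v algebra_simps)
qed

lemma sobolev_kraw_expansion:
  assumes "1 \<le> n" "n \<le> N" "0 < p" "p < 1"
    and "degree KS = n" "lead_coeff KS = 1"
    and orth: "\<forall>q. degree q < n \<longrightarrow> sob_ip N p lam mu j KS q = 0"
  shows "poly KS x = kraw N p n x
           - lam * fdiffs j (poly KS) 0 * kraw_ker N p 0 j (n - 1) x 0
           - mu * fdiffs j (poly KS) (real N) * kraw_ker N p 0 j (n - 1) x (real N)"
proof -
  let ?R = "KS - kraw_poly N p n"
  let ?D0 = "fdiffs j (poly KS) 0" and ?DN = "fdiffs j (poly KS) (real N)"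
  have "degree ?R \<le> n - 1"
  proof (cases "?R = 0")
    case False
    then have "degree ?R < n" using assms
      by (intro degree_diff_less_same_lead) (simp_all add: degree_kraw_poly coeff_kraw_poly_top)
    then show ?thesis by simp
  qed simp
  have coeff: "(\<Sum>y=0..N. poly ?R (real y) * kraw N p k (real y) * bweight N p y)
      = - lam * ?D0 * fdiffs j (kraw N p k) 0 - mu * ?DN * fdiffs j (kraw N p k) (real N)"
    if "k \<le> n - 1" for k
  proof -
    have "(\<Sum>y=0..N. poly ?R (real y) * kraw N p k (real y) * bweight N p y)
        = (\<Sum>y=0..N. poly KS (real y) * kraw N p k (real y) * bweight N p y)
          - (\<Sum>y=0..N. kraw N p n (real y) * kraw N p k (real y) * bweight N p y)"
      by (simp add: poly_kraw_poly sum_subtractf[symmetric] left_diff_distrib)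
    also have "(\<Sum>y=0..N. kraw N p n (real y) * kraw N p k (real y) * bweight N p y) = 0"
      using that assms by (intro kraw_orthogonal) auto
    also have "sob_ip N p lam mu j KS (kraw_poly N p k) = 0"
      using orth that assms by (simp add: degree_kraw_poly)
    then have "(\<Sum>y=0..N. poly KS (real y) * kraw N p k (real y) * bweight N p y)
        = - lam * ?D0 * fdiffs j (kraw N p k) 0 - mu * ?DN * fdiffs j (kraw N p k) (real N)"
      unfolding sob_ip_def poly_kraw_poly by linarith
    finally show ?thesis by simp
  qed
  have "poly KS x = kraw N p n x + poly ?R x" by (simp add: poly_kraw_poly)
  also have "poly ?R x = (\<Sum>k=0..n-1.
      (\<Sum>y=0..N. poly ?R (real y) * kraw N p k (real y) * bweight N p y) / kraw_norm2 N p k * kraw N p k x)"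
    using \<open>degree ?R \<le> n - 1\<close> assms by (intro poly_kraw_fourier_expansion) auto
  also have "\<dots> = (\<Sum>k=0..n-1.
      (- lam * ?D0 * fdiffs j (kraw N p k) 0 - mu * ?DN * fdiffs j (kraw N p k) (real N))
        / kraw_norm2 N p k * kraw N p k x)"
    by (intro sum.cong refl) (simp add: coeff del: poly_diff)
  also have "\<dots> = - lam * ?D0 * kraw_ker N p 0 j (n - 1) x 0 - mu * ?DN * kraw_ker N p 0 j (n - 1) x (real N)"
    unfolding kraw_ker_def fdiffs_0 sum_distrib_left sum_subtractf[symmetric]
    by (intro sum.cong refl) (simp add: diff_divide_distrib algebra_simps)
  finally show ?thesis by simp
qed

theorem mainTheorem2:
  fixes N n j :: nat and p lam mu :: real and KS :: "real poly"
  assumes "N \<ge> 1" and "0 < p" and "p < 1" and "lam > 0" and "mu > 0"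
    and "1 \<le> n" and "n \<le> N"
    and "degree KS = n" and "lead_coeff KS = 1"
    and "\<forall>q :: real poly. degree q < n \<longrightarrow> sob_ip N p lam mu j KS q = 0"
  shows "fdiffs j (poly KS) 0 = Phi1 N p lam mu j n
       \<and> fdiffs j (poly KS) (real N) = Phi2 N p lam mu j n
       \<and> (\<forall>x. poly KS x = kraw N p n x
               - lam * Phi1 N p lam mu j n * kraw_ker N p 0 j (n - 1) x 0
               - mu * Phi2 N p lam mu j n * kraw_ker N p 0 j (n - 1) x (real N))
       \<and> (\<forall>x. fall x (j + 1) \<noteq> 0 \<and> fall (x - real N) (j + 1) \<noteq> 0 \<longrightarrow>
               poly KS x = calC1 N p lam mu j n x * kraw N p n x
                         + calD1 N p lam mu j n x * kraw N p (n - 1) x)"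
proof -
  define D0 where "D0 = fdiffs j (poly KS) 0"
  define DN where "DN = fdiffs j (poly KS) (real N)"
  have expansion: "poly KS = (\<lambda>x. kraw N p n x - lam * D0 * kraw_ker N p 0 j (n - 1) x 0
                                  - mu * DN * kraw_ker N p 0 j (n - 1) x (real N))"
    using sobolev_kraw_expansion assms unfolding D0_def DN_def by blast
  have "fdiffs j (poly KS) z = fdiffs j (kraw N p n) z - lam * D0 * kraw_ker N p j j (n - 1) z 0
                               - mu * DN * kraw_ker N p j j (n - 1) z (real N)" for z
    by (subst expansion) (simp only: fdiffs_diff fdiffs_cmult fdiffs_kraw_ker_left)
  from this[of 0, folded D0_def] this[of "real N", folded DN_def]
  have Phi: "D0 = Phi1 N p lam mu j n" "DN = Phi2 N p lam mu j n"
    using delta_n_ge_1[of p lam mu N j n] assms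
    unfolding Phi1_def Phi2_def delta_n_def by (auto intro: linear_2x2_solve)
  have representation: "poly KS x = kraw N p n x
      - lam * Phi1 N p lam mu j n * kraw_ker N p 0 j (n - 1) x 0
      - mu * Phi2 N p lam mu j n * kraw_ker N p 0 j (n - 1) x (real N)" for x
    by (subst expansion) (simp add: Phi)
  have "poly KS x = calC1 N p lam mu j n x * kraw N p n x + calD1 N p lam mu j n x * kraw N p (n - 1) x"
    if "fall x (j + 1) \<noteq> 0" "fall (x - real N) (j + 1) \<noteq> 0" for x
    using that assms kraw_ker_eq_calA_calB[of n N p x 0 j] kraw_ker_eq_calA_calB[of n N p x "real N" j]
    unfolding calC1_def calD1_def representation by (simp add: algebra_simps)
  with Phi representation show ?thesis unfolding D0_def DN_def by blast
qed

end
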